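(* Let $(A,\circ,-,\sqcup)$ be a minus-algebra with override, and let $F$ be a filter of the right normal band $(A,\circ)$. Then $F$ is prime (i.e. whenever $a\in F$ and $b\in A$, either $b\in F$ or $a-b\in F$) if and only if for all $a,b\in A$, $a\sqcup b\in F$ implies $a\in F$ or $b\in F$.
   Context: A minus-algebra $(A,\circ,-)$ satisfies: $x\circ y=y-(y-x)$; $(A,\circ)$ is a right normal band (semigroup with $x\circ x=x$, $(x\circ y)\circ z=(y\circ x)\circ z$); there is an element $0$ with $x-x=0$ for all $x$; $x\circ0=0\circ x=0$; $(x-y)\circ x=x-y$; $(x-y)\circ y=0$; $(x-y)\circ z=(x\circ z)-y$; and $s-x=t-x\ \&\ x\circ s=x\circ t\Rightarrow s=t$. A minus-algebra with override additionally has $\sqcup$ with $(x\sqcup y)-x=y-x$ and $x\circ(x\sqcup y)=x$. Define $f\lesssim g$ iff $g\circ f=f$. A filter of $(A,\circ)$ is a non-empty $F\subseteq A$ closed under $\circ$ with $a\in F$, $a\lesssim b\Rightarrow b\in F$. *)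

theory Defs
  imports Main
begin

text \<open>A right normal band (A, comp): a semigroup with idempotence and
  (x comp y) comp z = (y comp x) comp z.  The carrier is the whole type.\<close>
definition right_normal_band :: "('a \<Rightarrow> 'a \<Rightarrow> 'a) \<Rightarrow> bool" where
  "right_normal_band c \<longleftrightarrow>
     (\<forall>x y z. c (c x y) z = c x (c y z)) \<and>
     (\<forall>x. c x x = x) \<and>
     (\<forall>x y z. c (c x y) z = c (c y x) z)"

definition minus_algebra :: "('a \<Rightarrow> 'a \<Rightarrow> 'a) \<Rightarrow> ('a \<Rightarrow> 'a \<Rightarrow> 'a) \<Rightarrow> bool" where
  "minus_algebra c m \<longleftrightarrow>
     (\<forall>x y. c x y = m y (m y x)) \<and>
     right_normal_band c \<and>
     (\<exists>z. (\<forall>x. m x x = z) \<and> (\<forall>x. c x z = z \<and> c z x = z) \<and>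
          (\<forall>x y. c (m x y) y = z)) \<and>
     (\<forall>x y. c (m x y) x = m x y) \<and>
     (\<forall>x y w. c (m x y) w = m (c x w) y) \<and>
     (\<forall>s t x. m s x = m t x \<and> c x s = c x t \<longrightarrow> s = t)"

definition minus_algebra_override ::
  "('a \<Rightarrow> 'a \<Rightarrow> 'a) \<Rightarrow> ('a \<Rightarrow> 'a \<Rightarrow> 'a) \<Rightarrow> ('a \<Rightarrow> 'a \<Rightarrow> 'a) \<Rightarrow> bool" where
  "minus_algebra_override c m u \<longleftrightarrow>
     minus_algebra c m \<and>
     (\<forall>x y. m (u x y) x = m y x) \<and>
     (\<forall>x y. c x (u x y) = x)"

definition band_le :: "('a \<Rightarrow> 'a \<Rightarrow> 'a) \<Rightarrow> 'a \<Rightarrow> 'a \<Rightarrow> bool" where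
  "band_le c f g \<longleftrightarrow> c g f = f"

definition band_filter :: "('a \<Rightarrow> 'a \<Rightarrow> 'a) \<Rightarrow> 'a set \<Rightarrow> bool" where
  "band_filter c F \<longleftrightarrow>
     F \<noteq> {} \<and>
     (\<forall>a\<in>F. \<forall>b\<in>F. c a b \<in> F) \<and>
     (\<forall>a b. a \<in> F \<and> band_le c a b \<longrightarrow> b \<in> F)"

definition prime_filter :: "('a \<Rightarrow> 'a \<Rightarrow> 'a) \<Rightarrow> 'a set \<Rightarrow> bool" where
  "prime_filter m F \<longleftrightarrow> (\<forall>a b. a \<in> F \<longrightarrow> b \<in> F \<or> m a b \<in> F)"

end

theory Submission
  imports Defs
begin

text \<open>The override a \<squnion> b satisfies a \<lesssim> a \<squnion> b and (a \<squnion> b) - a = b - a.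
  Hence if a \<squnion> b lies in a prime filter F then a \<in> F or b - a \<in> F, and b - a \<lesssim> b.
  Conversely a \<lesssim> b \<squnion> (a - b) by the cancellation law, so for a \<in> F the element
  b \<squnion> (a - b) lies in F, and the splitting property gives b \<in> F or a - b \<in> F.\<close>

lemma right_normal_band_le_of_comp:
  assumes "right_normal_band c" and "c y x = y"
  shows "band_le c y x"
proof -
  have assoc: "\<And>x y z. c (c x y) z = c x (c y z)"
    and rn: "\<And>x y z. c (c x y) z = c (c y x) z"
    using assms(1) unfolding right_normal_band_def by blast+
  have "c x y = c x (c y x)" using assms(2) by simp
  also have "\<dots> = c (c y x) x" by (metis assoc rn)
  also have "\<dots> = y" using assms(2) by simp
  finally show ?thesis unfolding band_le_def .
qed

lemma band_filter_upward:
  assumes "band_filter c F" and "a \<in> F" and "band_le c a b"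
  shows "b \<in> F"
  using assms unfolding band_filter_def by blast

locale minus_alg =
  fixes c m :: "'a \<Rightarrow> 'a \<Rightarrow> 'a"
  assumes minus_algebra: "minus_algebra c m"
begin

lemma right_normal_band: "right_normal_band c"
  using minus_algebra unfolding minus_algebra_def by blast

lemma comp_idem: "c x x = x"
  using right_normal_band unfolding right_normal_band_def by blast

lemma comp_assoc: "c (c x y) z = c x (c y z)"
  using right_normal_band unfolding right_normal_band_def by blast

lemma minus_comp_left: "c (m x y) x = m x y"
  and minus_comp: "c (m x y) w = m (c x w) y"
  and minus_cancel: "m s x = m t x \<Longrightarrow> c x s = c x t \<Longrightarrow> s = t"
  using minus_algebra unfolding minus_algebra_def by blast+

lemma minus_le: "band_le c (m x y) x"
  using right_normal_band_le_of_comp[OF right_normal_band minus_comp_left] .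

lemma minus_minus_same: "m (m x y) y = m x y"
proof -
  have "m x y = c (m x y) (m x y)" by (simp add: comp_idem)
  also have "\<dots> = m (c x (m x y)) y" by (rule minus_comp)
  also have "\<dots> = m (m x y) y" using minus_le unfolding band_le_def by simp
  finally show ?thesis ..
qed

end

locale minus_alg_override =
  fixes c m u :: "'a \<Rightarrow> 'a \<Rightarrow> 'a"
  assumes override: "minus_algebra_override c m u"

sublocale minus_alg_override \<subseteq> minus_alg
  using override unfolding minus_algebra_override_def by unfold_locales blast

context minus_alg_override
begin

lemma override_minus_left: "m (u x y) x = m y x"
  and comp_override: "c x (u x y) = x"
  using override unfolding minus_algebra_override_def by blast+

lemma le_override_minus: "band_le c a (u b (m a b))"
proof -
  let ?w = "u b (m a b)"
  have "m (c ?w a) b = c (m ?w b) a" by (simp add: minus_comp)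
  also have "\<dots> = c (m (m a b) b) a" by (simp add: override_minus_left)
  also have "\<dots> = m a b" by (simp add: minus_minus_same minus_comp_left)
  finally have "m (c ?w a) b = m a b" .
  moreover have "c b (c ?w a) = c b a" by (metis comp_assoc comp_override)
  ultimately show ?thesis unfolding band_le_def by (rule minus_cancel)
qed

end

theorem proposition3p13:
  fixes c m u :: "'a \<Rightarrow> 'a \<Rightarrow> 'a" and F :: "'a set"
  assumes "minus_algebra_override c m u"
    and "band_filter c F"
  shows "prime_filter m F \<longleftrightarrow> (\<forall>a b. u a b \<in> F \<longrightarrow> a \<in> F \<or> b \<in> F)"
proof -
  interpret minus_alg_override c m u by (rule minus_alg_override.intro) (rule assms(1))
  show ?thesis
  proof
    assume prime: "prime_filter m F"
    show "\<forall>a b. u a b \<in> F \<longrightarrow> a \<in> F \<or> b \<in> F"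
    proof (intro allI impI)
      fix a b assume "u a b \<in> F"
      then have "a \<in> F \<or> m b a \<in> F"
        using prime override_minus_left unfolding prime_filter_def by metis
      then show "a \<in> F \<or> b \<in> F"
        using band_filter_upward[OF assms(2) _ minus_le] by blast
    qed
  next
    assume split: "\<forall>a b. u a b \<in> F \<longrightarrow> a \<in> F \<or> b \<in> F"
    show "prime_filter m F" unfolding prime_filter_def
    proof (intro allI impI)
      fix a b assume "a \<in> F"
      then have "u b (m a b) \<in> F"
        using band_filter_upward[OF assms(2) _ le_override_minus] by blast
      then show "b \<in> F \<or> m a b \<in> F" using split by blast
    qed
  qed
qed

end
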